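(* For any discrete memoryless channel $Q$ with capacity $C(Q)>0$ (in the asynchronous communication model described in the context), every rate $R\in(0,C(Q))$ is achievable at some strictly positive asynchronism exponent; i.e., there is $\alpha>0$ that is achievable at rate $R$.
   Context: Model. A discrete memoryless channel has finite input alphabet $\mathcal X$, finite output alphabet $\mathcal Y$, transition probabilities $Q(y|x)$, and a distinguished "noise" input symbol $\star\in\mathcal X$; for every $y\in\mathcal Y$ there is $x$ with $Q(y|x)>0$. $C(Q)$ is the capacity of the ordinary (synchronized) channel. A code consists of $M\ge2$ equally likely messages, codewords $c^N(m)\in\mathcal X^N$, and a sequential decoder. The asynchronism level is an integer $A\ge1$: the start time $\nu$ is uniform on $\{1,\dots,A\}$, independent of the message. Given message $m$ and $\nu$, outputs $Y_1,Y_2,\dots$ are independent with $Y_i\sim Q(\cdot|\star)$ if $i\le\nu-1$ or $i\ge\nu+N$, and $Y_i\sim Q(\cdot|c_{i-\nu+1}(m))$ for $\nu\le i\le\nu+N-1$. The receiver knows $A$ and the code but not $\nu$. A decoder is $(\tau,\phi)$ with $\tau$ a stopping time w.r.t. $Y_1,Y_2,\dots$ and $\phi$ a function of $Y_1,\dots,Y_\tau$ returning a message. With $\mathbb P_{m,l},\mathbb E_{m,l}$ conditioning on message $m$ and $\nu=l$: $\mathbb P(\mathcal E)=\frac1{AM}\sum_{m,l}\mathbb P_{m,l}(\phi\neq m)$, $\mathbb E(\tau-\nu)^+=\frac1{AM}\sum_{m,l}\mathbb E_{m,l}(\tau-l)^+$, rate $R=\ln M/\mathbb E(\tau-\nu)^+$.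 An asynchronism exponent $\alpha$ is achievable at rate $R$ if for every $\varepsilon>0$ there is a code with (sufficiently large) blocklength $N$ operating at asynchronism level $A=e^{(\alpha-\varepsilon)N}$ with rate at least $R-\varepsilon$ and $\mathbb P(\mathcal E)\le\varepsilon$. *)

theory Defs
  imports "HOL-Analysis.Analysis"
begin

(* Discrete memoryless channel: Q x y = Q(y|x), finite alphabets 'x, 'y. *)
definition dmc :: "('x::finite \<Rightarrow> 'y::finite \<Rightarrow> real) \<Rightarrow> bool" where
  "dmc Q \<longleftrightarrow> (\<forall>x y. 0 \<le> Q x y) \<and> (\<forall>x. (\<Sum>y\<in>UNIV. Q x y) = 1)"

definition mutual_info :: "('x::finite \<Rightarrow> real) \<Rightarrow> ('x \<Rightarrow> 'y::finite \<Rightarrow> real) \<Rightarrow> real" where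
  "mutual_info P Q = (\<Sum>x\<in>UNIV. \<Sum>y\<in>UNIV.
     (if P x * Q x y = 0 then 0
      else P x * Q x y * ln (Q x y / (\<Sum>x'\<in>UNIV. P x' * Q x' y))))"

definition input_distrs :: "('x::finite \<Rightarrow> real) set" where
  "input_distrs = {P. (\<forall>x. 0 \<le> P x) \<and> (\<Sum>x\<in>UNIV. P x) = 1}"

definition capacity :: "('x::finite \<Rightarrow> 'y::finite \<Rightarrow> real) \<Rightarrow> real" where
  "capacity Q = (SUP P\<in>input_distrs. mutual_info P Q)"

(* Channel input at (1-based) time i, given message m and start time l;
   codeword c m j is the (j+1)-th symbol of codeword m, j < N. *)
definition async_input :: "(nat \<Rightarrow> nat \<Rightarrow> 'x) \<Rightarrow> nat \<Rightarrow> 'x \<Rightarrow> nat \<Rightarrow> nat \<Rightarrow> nat \<Rightarrow> 'x" where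
  "async_input c N star m l i = (if l \<le> i \<and> i < l + N then c m (i - l) else star)"

definition out_prob :: "('x \<Rightarrow> 'y \<Rightarrow> real) \<Rightarrow> (nat \<Rightarrow> nat \<Rightarrow> 'x) \<Rightarrow> nat \<Rightarrow> 'x
    \<Rightarrow> nat \<Rightarrow> nat \<Rightarrow> 'y list \<Rightarrow> real" where
  "out_prob Q c N star m l ys = (\<Prod>i<length ys. Q (async_input c N star m l (Suc i)) (ys ! i))"

(* Stopping time tau = least n with stop (Y_1..Y_n); ys is the observation
   at which tau stops iff first_stop stop ys. *)
definition first_stop :: "('y list \<Rightarrow> bool) \<Rightarrow> 'y list \<Rightarrow> bool" where
  "first_stop stop ys \<longleftrightarrow> stop ys \<and> (\<forall>k<length ys. \<not> stop (take k ys))"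

definition stop_prob :: "('x \<Rightarrow> 'y::finite \<Rightarrow> real) \<Rightarrow> (nat \<Rightarrow> nat \<Rightarrow> 'x) \<Rightarrow> nat \<Rightarrow> 'x
    \<Rightarrow> ('y list \<Rightarrow> bool) \<Rightarrow> nat \<Rightarrow> nat \<Rightarrow> nat \<Rightarrow> real" where
  "stop_prob Q c N star stop m l n =
     (\<Sum>ys\<in>{ys. length ys = n \<and> first_stop stop ys}. out_prob Q c N star m l ys)"

definition err_prob :: "('x \<Rightarrow> 'y::finite \<Rightarrow> real) \<Rightarrow> (nat \<Rightarrow> nat \<Rightarrow> 'x) \<Rightarrow> nat \<Rightarrow> 'x
    \<Rightarrow> ('y list \<Rightarrow> bool) \<Rightarrow> ('y list \<Rightarrow> nat) \<Rightarrow> nat \<Rightarrow> nat \<Rightarrow> ennreal" where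
  "err_prob Q c N star stop dec m l =
     (\<Sum>n. ennreal (\<Sum>ys\<in>{ys. length ys = n \<and> first_stop stop ys \<and> dec ys \<noteq> m}.
                       out_prob Q c N star m l ys))"

(* E_{m,l} (tau - l)^+ ; infinite if tau = infinity with positive probability *)
definition exp_delay :: "('x \<Rightarrow> 'y::finite \<Rightarrow> real) \<Rightarrow> (nat \<Rightarrow> nat \<Rightarrow> 'x) \<Rightarrow> nat \<Rightarrow> 'x
    \<Rightarrow> ('y list \<Rightarrow> bool) \<Rightarrow> nat \<Rightarrow> nat \<Rightarrow> ennreal" where
  "exp_delay Q c N star stop m l =
     (\<Sum>n. ennreal (stop_prob Q c N star stop m l n * real (n - l)))
     + (if (\<Sum>n. ennreal (stop_prob Q c N star stop m l n)) < 1 then top else 0)"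

definition avg_err :: "('x \<Rightarrow> 'y::finite \<Rightarrow> real) \<Rightarrow> 'x \<Rightarrow> nat \<Rightarrow> nat \<Rightarrow> nat
    \<Rightarrow> (nat \<Rightarrow> nat \<Rightarrow> 'x) \<Rightarrow> ('y list \<Rightarrow> bool) \<Rightarrow> ('y list \<Rightarrow> nat) \<Rightarrow> ennreal" where
  "avg_err Q star A M N c stop dec =
     (\<Sum>m<M. \<Sum>l\<in>{1..A}. err_prob Q c N star stop dec m l) / ennreal (real (A * M))"

definition avg_delay :: "('x \<Rightarrow> 'y::finite \<Rightarrow> real) \<Rightarrow> 'x \<Rightarrow> nat \<Rightarrow> nat \<Rightarrow> nat
    \<Rightarrow> (nat \<Rightarrow> nat \<Rightarrow> 'x) \<Rightarrow> ('y list \<Rightarrow> bool) \<Rightarrow> ennreal" where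
  "avg_delay Q star A M N c stop =
     (\<Sum>m<M. \<Sum>l\<in>{1..A}. exp_delay Q c N star stop m l) / ennreal (real (A * M))"

(* Rate ln M / E(tau-nu)^+ \<ge> R - eps is expressed as (R - eps) * E(tau-nu)^+ \<le> ln M
   in ennreal (trivial when R - eps \<le> 0; forces finite delay otherwise). *)
definition achievable_async_exponent ::
    "('x::finite \<Rightarrow> 'y::finite \<Rightarrow> real) \<Rightarrow> 'x \<Rightarrow> real \<Rightarrow> real \<Rightarrow> bool" where
  "achievable_async_exponent Q star \<alpha> R \<longleftrightarrow>
     (\<forall>\<epsilon>>0. \<exists>N0. \<forall>N\<ge>N0. \<exists>(M::nat) (c::nat \<Rightarrow> nat \<Rightarrow> 'x) (stop::'y list \<Rightarrow> bool) (dec::'y list \<Rightarrow> nat).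
        let A = nat \<lceil>exp ((\<alpha> - \<epsilon>) * real N)\<rceil> in
        M \<ge> 2 \<and>
        avg_err Q star A M N c stop dec \<le> ennreal \<epsilon> \<and>
        ennreal (R - \<epsilon>) * avg_delay Q star A M N c stop \<le> ennreal (ln (real M)))"

end

theory Submission
  imports Defs
begin

(*
  Random coding with a sliding-window threshold decoder. Fix an input distribution P with
  I(P,Q) > T > R' > R and draw about e^(R' N) codewords i.i.d. from P^N. The decoder stops at the
  first time at which the last N outputs y and some codeword x pass the test
  prod_k Q(y_k|x_k) / P_Y(y_k) >= e^(N T), and returns that codeword (it stops anyway after the last
  possible window, at time A + N - 1). By a change of measure, a wrong codeword or pure noise passes
  the test with probability at most e^(-N T); the sent codeword fails it in its own window with
  probability at most G(s)^N (Chernoff), where G(s) = E (e^T / r)^s satisfies G(0) = 1 and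
  G'(0) = T - I(P,Q) < 0, hence G(s) < 1 for some s > 0. The union bound over the A + N - 1 windows
  then gives, averaged over codebooks, error probability at most
  d = G(s)^N + (A + N - 1) e^(R' N) e^(-N T) and expected delay at most N - 1 + (A + N - 1) d.
  With A = e^(alpha N) and alpha small, (A + N - 1) d decays geometrically in N, so the error
  vanishes and the delay is at most N, i.e. the rate is at least R'.
*)

section \<open>Sums over words of fixed length\<close>

lemma sum_lists_length_prod:
  fixes f :: "nat \<Rightarrow> 'a \<Rightarrow> 'b::comm_semiring_1"
  assumes "finite S"
  shows "(\<Sum>xs\<in>{xs. set xs \<subseteq> S \<and> length xs = n}. \<Prod>i<n. f i (xs!i)) = (\<Prod>i<n. \<Sum>a\<in>S. f i a)"
proof (induction n arbitrary: f)
  case 0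
  have "{xs. set xs \<subseteq> S \<and> length xs = 0} = {[]}" by auto
  then show ?case by simp
next
  case (Suc n)
  let ?L = "{xs. set xs \<subseteq> S \<and> length xs = n}"
  have inj: "inj_on (\<lambda>(xs, a). a # xs) (?L \<times> S)"
    by (auto simp: inj_on_def)
  have "(\<Sum>xs\<in>{xs. set xs \<subseteq> S \<and> length xs = Suc n}. \<Prod>i<Suc n. f i (xs!i))
      = (\<Sum>p\<in>?L \<times> S. \<Prod>i<Suc n. f i ((snd p # fst p)!i))"
    unfolding lists_length_Suc_eq by (subst sum.reindex[OF inj]) (simp add: case_prod_beta)
  also have "\<dots> = (\<Sum>p\<in>?L \<times> S. f 0 (snd p) * (\<Prod>i<n. f (Suc i) (fst p ! i)))"
    by (simp only: prod.lessThan_Suc_shift) simp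
  also have "\<dots> = (\<Sum>xs\<in>?L. \<Sum>a\<in>S. f 0 a * (\<Prod>i<n. f (Suc i) (xs ! i)))"
    by (simp add: sum.cartesian_product case_prod_beta)
  also have "\<dots> = (\<Sum>a\<in>S. f 0 a) * (\<Sum>xs\<in>?L. \<Prod>i<n. f (Suc i) (xs ! i))"
    by (simp add: sum_distrib_left sum_distrib_right)
  also have "\<dots> = (\<Prod>i<Suc n. \<Sum>a\<in>S. f i a)"
    unfolding prod.lessThan_Suc_shift using Suc.IH[of "\<lambda>i. f (Suc i)"] by simp
  finally show ?case .
qed

lemma finite_lists_length_UNIV [simp]: "finite {xs::'a::finite list. length xs = n}"
  using finite_lists_length_eq[of "UNIV::'a set" n] by simp

lemma sum_lists_length_prod_UNIV:
  fixes f :: "nat \<Rightarrow> 'a::finite \<Rightarrow> 'b::comm_semiring_1"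
  shows "(\<Sum>xs\<in>{xs. length xs = n}. \<Prod>i<n. f i (xs!i)) = (\<Prod>i<n. \<Sum>a\<in>UNIV. f i a)"
  using sum_lists_length_prod[of "UNIV::'a set" f n] by simp

lemma sum_lists_length_add:
  "(\<Sum>ys\<in>{ys::'a::finite list. length ys = n + k}. g ys)
   = (\<Sum>zs\<in>{zs. length zs = n}. \<Sum>ws\<in>{ws. length ws = k}. g (zs @ ws))"
proof -
  let ?S = "{zs::'a list. length zs = n} \<times> {ws. length ws = k}"
  have inj: "inj_on (\<lambda>(zs, ws). zs @ ws) ?S"
    by (auto simp: inj_on_def)
  have image: "{ys::'a list. length ys = n + k} = (\<lambda>(zs, ws). zs @ ws) ` ?S"
  proof safe
    fix ys :: "'a list" assume "length ys = n + k"
    then show "ys \<in> (\<lambda>(zs, ws). zs @ ws) ` ?S"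
      by (intro image_eqI[of _ _ "(take n ys, drop n ys)"]) auto
  qed auto
  show ?thesis
    unfolding image by (subst sum.reindex[OF inj]) (simp add: sum.cartesian_product case_prod_beta)
qed

lemma sum_lists_length_filter:
  "(\<Sum>zs\<in>{zs::'a::finite list. length zs = n \<and> P zs}. g zs)
   = (\<Sum>zs\<in>{zs. length zs = n}. if P zs then g zs else 0)"
proof -
  have "{zs::'a list. length zs = n \<and> P zs} = {zs \<in> {zs. length zs = n}. P zs}" by simp
  then show ?thesis by (simp only: sum.inter_filter[OF finite_lists_length_UNIV])
qed

lemma prod_lessThan_add:
  fixes f :: "nat \<Rightarrow> 'a::comm_monoid_mult"
  shows "(\<Prod>i<n + k. f i) = (\<Prod>i<n. f i) * (\<Prod>j<k. f (n + j))"
  by (induction k) (auto simp: mult.assoc)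

lemma prod_lessThan_window:
  fixes f :: "nat \<Rightarrow> 'a::comm_monoid_mult"
  assumes "j + N \<le> K"
  shows "(\<Prod>i<K. if j \<le> i \<and> i < j + N then f i else 1) = (\<Prod>k<N. f (j + k))"
proof -
  have "{i \<in> {..<K}. j \<le> i \<and> i < j + N} = {0 + j..<N + j}" using assms by auto
  then have "(\<Prod>i<K. if j \<le> i \<and> i < j + N then f i else 1) = (\<Prod>i\<in>{0 + j..<N + j}. f i)"
    by (simp only: prod.inter_filter[OF finite_lessThan, symmetric])
  also have "\<dots> = (\<Prod>k<N. f (j + k))"
    using prod.shift_bounds_nat_ivl[of f 0 j N] by (simp add: atLeast0LessThan add.commute)
  finally show ?thesis .
qed

section \<open>Product laws and bounded stopping times\<close>

definition seq_prob :: "(nat \<Rightarrow> 'y \<Rightarrow> real) \<Rightarrow> 'y list \<Rightarrow> real" where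
  "seq_prob q ys = (\<Prod>i<length ys. q i (ys!i))"

lemma seq_prob_append:
  "seq_prob q (zs @ ws) = seq_prob q zs * (\<Prod>j<length ws. q (length zs + j) (ws!j))"
  unfolding seq_prob_def by (simp add: prod_lessThan_add nth_append)

text \<open>As a \<open>LEAST\<close> it is junk unless some
  prefix satisfies \<open>stop\<close>, which is why it is only used for decoders that stop by time \<open>K\<close>.\<close>

definition stop_time :: "('y list \<Rightarrow> bool) \<Rightarrow> 'y list \<Rightarrow> nat" where
  "stop_time stop ys = (LEAST k. stop (take k ys))"

context
  fixes stop :: "'y list \<Rightarrow> bool" and K :: nat
  assumes stop_at_K: "\<And>ys. length ys = K \<Longrightarrow> stop ys"
begin

lemma not_first_stop_after: "K < length zs \<Longrightarrow> \<not> first_stop stop zs"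
  unfolding first_stop_def using stop_at_K[of "take K zs"] by auto

lemma stop_time_le: "length ys = K \<Longrightarrow> stop_time stop ys \<le> K"
  unfolding stop_time_def by (rule Least_le) (simp add: stop_at_K)

lemma stop_take_stop_time: "length ys = K \<Longrightarrow> stop (take (stop_time stop ys) ys)"
  unfolding stop_time_def by (rule LeastI[of _ K]) (simp add: stop_at_K)

lemma first_stop_take_iff:
  assumes "length ys = K" "n \<le> K"
  shows "first_stop stop (take n ys) \<longleftrightarrow> n = stop_time stop ys"
proof
  assume fs: "first_stop stop (take n ys)"
  have "\<not> stop (take k ys)" if "k < n" for k
  proof -
    have "take k (take n ys) = take k ys" using that by (simp add: min_def)
    moreover have "k < length (take n ys)" using that assms by simp
    ultimately show ?thesis using fs unfolding first_stop_def by metis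
  qed
  then have "\<not> stop_time stop ys < n"
    using stop_take_stop_time[OF assms(1)] by blast
  moreover have "stop_time stop ys \<le> n"
    using fs unfolding first_stop_def stop_time_def by (intro Least_le) simp
  ultimately show "n = stop_time stop ys" by simp
next
  assume "n = stop_time stop ys"
  moreover have "\<not> stop (take k ys)" if "k < stop_time stop ys" for k
    using that unfolding stop_time_def by (rule not_less_Least)
  ultimately show "first_stop stop (take n ys)"
    using stop_take_stop_time[OF assms(1)] unfolding first_stop_def by (auto simp: min_def)
qed

end

locale product_law =
  fixes q :: "nat \<Rightarrow> 'y::finite \<Rightarrow> real"
  assumes q_nonneg: "\<And>i y. 0 \<le> q i y" and sum_q: "\<And>i. (\<Sum>y\<in>UNIV. q i y) = 1"
begin

lemma seq_prob_nonneg: "0 \<le> seq_prob q ys"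
  unfolding seq_prob_def by (auto intro: prod_nonneg q_nonneg)

lemma sum_seq_prob_shifted: "(\<Sum>ws\<in>{ws::'y list. length ws = k}. \<Prod>j<k. q (n + j) (ws!j)) = 1"
  by (subst sum_lists_length_prod_UNIV) (simp add: sum_q)

lemma sum_seq_prob: "(\<Sum>ys\<in>{ys::'y list. length ys = k}. seq_prob q ys) = 1"
  using sum_seq_prob_shifted[where k=k and n=0] unfolding seq_prob_def by simp

lemma sum_seq_prob_take:
  assumes "n \<le> K"
  shows "(\<Sum>ys\<in>{ys::'y list. length ys = K}. seq_prob q ys * g (take n ys))
       = (\<Sum>zs\<in>{zs. length zs = n}. seq_prob q zs * g zs)"
proof -
  obtain k where K: "K = n + k" using assms le_Suc_ex by blast
  have "(\<Sum>ys\<in>{ys::'y list. length ys = K}. seq_prob q ys * g (take n ys))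
     = (\<Sum>zs\<in>{zs::'y list. length zs = n}. seq_prob q zs * g zs
          * (\<Sum>ws\<in>{ws::'y list. length ws = k}. \<Prod>j<k. q (n + j) (ws!j)))"
    unfolding K sum_lists_length_add
    by (intro sum.cong refl) (auto simp: seq_prob_append sum_distrib_left mult_ac)
  then show ?thesis by (simp add: sum_seq_prob_shifted)
qed

context
  fixes stop :: "'y list \<Rightarrow> bool" and K :: nat
  assumes stop_at_K: "\<And>ys. length ys = K \<Longrightarrow> stop ys"
begin

text \<open>A stopping time bounded by \<open>K\<close> is a function of the first \<open>K\<close> outputs, so averages over
  the stopped observation become averages over output sequences of length \<open>K\<close>.\<close>

lemma sum_first_stop_eq:
  "(\<Sum>n\<le>K. \<Sum>zs\<in>{zs::'y list. length zs = n \<and> first_stop stop zs}. seq_prob q zs * h zs)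
   = (\<Sum>ys\<in>{ys::'y list. length ys = K}. seq_prob q ys * h (take (stop_time stop ys) ys))"
proof -
  have "(\<Sum>zs\<in>{zs::'y list. length zs = n \<and> first_stop stop zs}. seq_prob q zs * h zs)
      = (\<Sum>ys\<in>{ys::'y list. length ys = K}.
            seq_prob q ys * (if first_stop stop (take n ys) then h (take n ys) else 0))"
    if "n \<le> K" for n
  proof -
    have "(\<Sum>zs\<in>{zs::'y list. length zs = n \<and> first_stop stop zs}. seq_prob q zs * h zs)
        = (\<Sum>zs\<in>{zs. length zs = n}. seq_prob q zs * (if first_stop stop zs then h zs else 0))"
      unfolding sum_lists_length_filter by (intro sum.cong refl) simp
    also have "\<dots> = (\<Sum>ys\<in>{ys::'y list. length ys = K}.
            seq_prob q ys * (if first_stop stop (take n ys) then h (take n ys) else 0))"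
      by (rule sum_seq_prob_take[OF that, symmetric])
    finally show ?thesis .
  qed
  then have "(\<Sum>n\<le>K. \<Sum>zs\<in>{zs::'y list. length zs = n \<and> first_stop stop zs}. seq_prob q zs * h zs)
      = (\<Sum>n\<le>K. \<Sum>ys\<in>{ys::'y list. length ys = K}.
            seq_prob q ys * (if first_stop stop (take n ys) then h (take n ys) else 0))"
    by simp
  also have "\<dots> = (\<Sum>ys\<in>{ys::'y list. length ys = K}. \<Sum>n\<le>K.
            seq_prob q ys * (if n = stop_time stop ys then h (take n ys) else 0))"
    by (subst sum.swap) (intro sum.cong refl, simp add: first_stop_take_iff[OF stop_at_K])
  also have "\<dots> = (\<Sum>ys\<in>{ys::'y list. length ys = K}. seq_prob q ys * h (take (stop_time stop ys) ys))"
    by (intro sum.cong refl) (simp add: sum_distrib_left[symmetric] stop_time_le[OF stop_at_K])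
  finally show ?thesis .
qed

lemma suminf_first_stop_eq:
  assumes h_nonneg: "\<And>zs. 0 \<le> h zs"
  shows "(\<Sum>n. ennreal (\<Sum>zs\<in>{zs::'y list. length zs = n \<and> first_stop stop zs}. seq_prob q zs * h zs))
     = ennreal (\<Sum>ys\<in>{ys::'y list. length ys = K}. seq_prob q ys * h (take (stop_time stop ys) ys))"
proof -
  have no_stop_after: "{zs::'y list. length zs = n \<and> first_stop stop zs} = {}" if "n \<notin> {..K}" for n
    using not_first_stop_after[where stop=stop and K=K, OF stop_at_K] that by auto
  have "(\<Sum>n. ennreal (\<Sum>zs\<in>{zs::'y list. length zs = n \<and> first_stop stop zs}. seq_prob q zs * h zs))
      = (\<Sum>n\<le>K. ennreal (\<Sum>zs\<in>{zs::'y list. length zs = n \<and> first_stop stop zs}. seq_prob q zs * h zs))"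
    by (rule suminf_finite) (auto simp: no_stop_after)
  also have "\<dots> = ennreal (\<Sum>n\<le>K. \<Sum>zs\<in>{zs::'y list. length zs = n \<and> first_stop stop zs}. seq_prob q zs * h zs)"
    by (rule sum_ennreal) (auto intro!: sum_nonneg mult_nonneg_nonneg seq_prob_nonneg h_nonneg)
  finally show ?thesis by (simp only: sum_first_stop_eq)
qed

end

end

lemma dmc_product_law: "dmc Q \<Longrightarrow> product_law (\<lambda>i. Q (f i))"
  unfolding dmc_def product_law_def by auto

lemma out_prob_eq_seq_prob:
  "out_prob Q c N star m l = seq_prob (\<lambda>i. Q (async_input c N star m l (Suc i)))"
  unfolding out_prob_def seq_prob_def by (rule ext) simp

context
  fixes Q :: "'x::finite \<Rightarrow> 'y::finite \<Rightarrow> real" and stop :: "'y list \<Rightarrow> bool" and K :: nat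
  assumes dmc: "dmc Q" and stop_at_K: "\<And>ys. length ys = K \<Longrightarrow> stop ys"
begin

lemma err_prob_eq_sum:
  "err_prob Q c N star stop dec m l = ennreal (\<Sum>ys\<in>{ys::'y list. length ys = K}.
     seq_prob (\<lambda>i. Q (async_input c N star m l (Suc i))) ys
       * of_bool (dec (take (stop_time stop ys) ys) \<noteq> m))"
proof -
  interpret product_law "\<lambda>i. Q (async_input c N star m l (Suc i))"
    using dmc_product_law[OF dmc] .
  have "(\<Sum>ys\<in>{ys. length ys = n \<and> first_stop stop ys \<and> dec ys \<noteq> m}. out_prob Q c N star m l ys)
     = (\<Sum>zs\<in>{zs::'y list. length zs = n \<and> first_stop stop zs}.
          seq_prob (\<lambda>i. Q (async_input c N star m l (Suc i))) zs * of_bool (dec zs \<noteq> m))" for n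
    unfolding out_prob_eq_seq_prob sum_lists_length_filter by (intro sum.cong refl) auto
  then show ?thesis
    unfolding err_prob_def
    using suminf_first_stop_eq[where stop=stop and K=K and h="\<lambda>zs. of_bool (dec zs \<noteq> m)", OF stop_at_K]
    by simp
qed

lemma exp_delay_eq_sum:
  "exp_delay Q c N star stop m l = ennreal (\<Sum>ys\<in>{ys::'y list. length ys = K}.
     seq_prob (\<lambda>i. Q (async_input c N star m l (Suc i))) ys * real (stop_time stop ys - l))"
proof -
  interpret product_law "\<lambda>i. Q (async_input c N star m l (Suc i))"
    using dmc_product_law[OF dmc] .
  have "length (take (stop_time stop ys) ys) = stop_time stop ys" if "length ys = K" for ys
    using stop_time_le[OF stop_at_K that] that by simp
  then have delay: "(\<Sum>n. ennreal (stop_prob Q c N star stop m l n * real (n - l)))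
     = ennreal (\<Sum>ys\<in>{ys::'y list. length ys = K}.
         seq_prob (\<lambda>i. Q (async_input c N star m l (Suc i))) ys * real (stop_time stop ys - l))"
    unfolding stop_prob_def out_prob_eq_seq_prob sum_distrib_right
    using suminf_first_stop_eq[where stop=stop and K=K and h="\<lambda>zs. real (length zs - l)", OF stop_at_K] by simp
  have "(\<Sum>n. ennreal (stop_prob Q c N star stop m l n)) = 1"
    unfolding stop_prob_def out_prob_eq_seq_prob
    using suminf_first_stop_eq[where stop=stop and K=K and h="\<lambda>zs. 1", OF stop_at_K] sum_seq_prob by simp
  then show ?thesis unfolding exp_delay_def delay by simp
qed

end

section \<open>Averages over random codebooks\<close>

lemma exists_le_of_weighted_sum_le:
  fixes F :: "'a \<Rightarrow> real"
  assumes "finite C" "\<And>c. c \<in> C \<Longrightarrow> 0 \<le> w c" "(\<Sum>c\<in>C. w c) = 1"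
    and "(\<Sum>c\<in>C. w c * F c) \<le> \<delta>"
  shows "\<exists>c\<in>C. F c \<le> \<delta>"
proof (rule ccontr)
  assume "\<not> ?thesis"
  then have gt: "\<And>c. c \<in> C \<Longrightarrow> \<delta> < F c" by force
  obtain c0 where c0: "c0 \<in> C" "w c0 \<noteq> 0"
    using assms(3) by (metis one_neq_zero sum.neutral)
  have "0 < (\<Sum>c\<in>C. w c * (F c - \<delta>))"
    using c0 gt assms(2) by (intro sum_pos2[OF assms(1) c0(1)]) (auto simp: order.strict_iff_order)
  also have "\<dots> = (\<Sum>c\<in>C. w c * F c) - \<delta>"
    by (simp add: right_diff_distrib sum_subtractf sum_distrib_right[symmetric] assms(3))
  finally show False using assms(4) by simp
qed

lemma prod_lessThan_two_points:
  fixes x y :: "'a::comm_monoid_mult" and m m' M :: nat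
  assumes "m < M" "m' < M" "m \<noteq> m'"
  shows "(\<Prod>i<M. if i = m then x else if i = m' then y else 1) = x * y"
proof -
  have "(\<Prod>i<M. if i = m then x else if i = m' then y else 1)
      = (\<Prod>i<M. (if i = m then x else 1) * (if i = m' then y else 1))"
    using assms(3) by (intro prod.cong) auto
  also have "\<dots> = x * y"
    using assms(1,2) by (simp add: prod.distrib)
  finally show ?thesis .
qed

lemma sum_lists_length_nth_pair:
  fixes p :: "'a \<Rightarrow> real"
  assumes S: "finite S" and sum_p: "(\<Sum>a\<in>S. p a) = 1"
    and m: "m < M" "m' < M" "m \<noteq> m'"
  shows "(\<Sum>cs\<in>{cs. set cs \<subseteq> S \<and> length cs = M}. (\<Prod>i<M. p (cs!i)) * F (cs!m) (cs!m'))
       = (\<Sum>a\<in>S. \<Sum>b\<in>S. p a * p b * F a b)"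
proof -
  let ?C = "{cs. set cs \<subseteq> S \<and> length cs = M}"
  let ?e = "\<lambda>a b i z. if i = m then of_bool (z = a) else if i = m' then of_bool (z = b) else 1 :: real"
  have F_eq: "F (cs!m) (cs!m') = (\<Sum>a\<in>S. \<Sum>b\<in>S. F a b * (\<Prod>i<M. ?e a b i (cs!i)))"
    if "cs \<in> ?C" for cs
  proof -
    have "cs!m \<in> S" "cs!m' \<in> S" using that m by (auto simp: subset_iff)
    have "(\<Prod>i<M. ?e a b i (cs!i)) = of_bool (cs!m = a) * of_bool (cs!m' = b)" for a b
      using prod_lessThan_two_points[OF m, of "of_bool (cs!m = a)" "of_bool (cs!m' = b)"]
      by (simp add: if_distrib cong: if_cong)
    then have "(\<Sum>a\<in>S. \<Sum>b\<in>S. F a b * (\<Prod>i<M. ?e a b i (cs!i)))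
        = (\<Sum>a\<in>S. if cs!m = a then (\<Sum>b\<in>S. if cs!m' = b then F a b else 0) else 0)"
      by (auto simp: of_bool_def intro!: sum.cong)
    also have "\<dots> = F (cs!m) (cs!m')"
      using S \<open>cs!m \<in> S\<close> \<open>cs!m' \<in> S\<close> by (simp add: sum.delta)
    finally show ?thesis by simp
  qed
  have sum_e: "(\<Sum>cs\<in>?C. (\<Prod>i<M. p (cs!i)) * (\<Prod>i<M. ?e a b i (cs!i))) = p a * p b"
    if "a \<in> S" "b \<in> S" for a b
  proof -
    have "(\<Sum>cs\<in>?C. (\<Prod>i<M. p (cs!i)) * (\<Prod>i<M. ?e a b i (cs!i)))
        = (\<Prod>i<M. \<Sum>z\<in>S. p z * ?e a b i z)"
      unfolding prod.distrib[symmetric] by (rule sum_lists_length_prod[OF S])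
    also have "\<dots> = (\<Prod>i<M. if i = m then p a else if i = m' then p b else 1)"
      using S that sum_p m(3) by (intro prod.cong refl) auto
    also have "\<dots> = p a * p b"
      by (rule prod_lessThan_two_points[OF m])
    finally show ?thesis .
  qed
  have "(\<Sum>cs\<in>?C. (\<Prod>i<M. p (cs!i)) * F (cs!m) (cs!m'))
      = (\<Sum>cs\<in>?C. \<Sum>a\<in>S. \<Sum>b\<in>S. F a b * ((\<Prod>i<M. p (cs!i)) * (\<Prod>i<M. ?e a b i (cs!i))))"
    by (rule sum.cong[OF refl]) (simp add: F_eq sum_distrib_left mult_ac)
  also have "\<dots> = (\<Sum>a\<in>S. \<Sum>b\<in>S. \<Sum>cs\<in>?C. F a b * ((\<Prod>i<M. p (cs!i)) * (\<Prod>i<M. ?e a b i (cs!i))))"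
    by (subst sum.swap) (intro sum.cong refl sum.swap)
  also have "\<dots> = (\<Sum>a\<in>S. \<Sum>b\<in>S. F a b * (\<Sum>cs\<in>?C. (\<Prod>i<M. p (cs!i)) * (\<Prod>i<M. ?e a b i (cs!i))))"
    by (simp only: sum_distrib_left)
  also have "\<dots> = (\<Sum>a\<in>S. \<Sum>b\<in>S. p a * p b * F a b)"
    by (intro sum.cong refl) (simp add: sum_e)
  finally show ?thesis .
qed

lemma sum_lists_length_nth:
  fixes p :: "'a \<Rightarrow> real"
  assumes S: "finite S" and sum_p: "(\<Sum>a\<in>S. p a) = 1" and "m < M" "2 \<le> M"
  shows "(\<Sum>cs\<in>{cs. set cs \<subseteq> S \<and> length cs = M}. (\<Prod>i<M. p (cs!i)) * F (cs!m))
       = (\<Sum>a\<in>S. p a * F a)"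
proof -
  define m' where "m' = (if m = 0 then 1 else 0::nat)"
  have "m' < M" "m \<noteq> m'" using assms unfolding m'_def by auto
  then have "(\<Sum>cs\<in>{cs. set cs \<subseteq> S \<and> length cs = M}. (\<Prod>i<M. p (cs!i)) * F (cs!m))
      = (\<Sum>a\<in>S. \<Sum>b\<in>S. p a * p b * F a)"
    using sum_lists_length_nth_pair[OF S sum_p \<open>m < M\<close>, of m' "\<lambda>a b. F a"] by simp
  also have "\<dots> = (\<Sum>a\<in>S. p a * F a)"
    by (simp add: sum_distrib_left[symmetric] sum_distrib_right[symmetric] sum_p mult_ac)
  finally show ?thesis .
qed

section \<open>The information density test\<close>

definition out_marginal :: "('x::finite \<Rightarrow> real) \<Rightarrow> ('x \<Rightarrow> 'y \<Rightarrow> real) \<Rightarrow> 'y \<Rightarrow> real" where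
  "out_marginal P Q b = (\<Sum>a\<in>UNIV. P a * Q a b)"

text \<open>The exponential of the information density \<open>ln (Q(b|a) / P\<^sub>Y(b))\<close>; it is \<open>0\<close> (not undefined)
  when \<open>P\<^sub>Y(b) = 0\<close>.\<close>

definition info_ratio :: "('x::finite \<Rightarrow> real) \<Rightarrow> ('x \<Rightarrow> 'y \<Rightarrow> real) \<Rightarrow> 'x \<Rightarrow> 'y \<Rightarrow> real" where
  "info_ratio P Q a b = Q a b / out_marginal P Q b"

definition info_test ::
    "('x::finite \<Rightarrow> real) \<Rightarrow> ('x \<Rightarrow> 'y \<Rightarrow> real) \<Rightarrow> nat \<Rightarrow> real \<Rightarrow> 'x list \<Rightarrow> 'y list \<Rightarrow> bool" where
  "info_test P Q N thr x w \<longleftrightarrow> thr \<le> (\<Prod>k<N. info_ratio P Q (x!k) (w!k))"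

text \<open>Law of the \<open>i\<close>-th output (\<open>0\<close>-based) when codeword \<open>x\<close> of length \<open>N\<close> starts at time \<open>l\<close>
  (\<open>1\<close>-based), as in \<open>async_input\<close>.\<close>

definition codeword_law :: "('x \<Rightarrow> 'y \<Rightarrow> real) \<Rightarrow> 'x \<Rightarrow> nat \<Rightarrow> 'x list \<Rightarrow> nat \<Rightarrow> nat \<Rightarrow> 'y \<Rightarrow> real" where
  "codeword_law Q star N x l i = Q (if l \<le> Suc i \<and> Suc i < l + N then x ! (Suc i - l) else star)"

lemma codeword_law_window: "k < N \<Longrightarrow> codeword_law Q star N x (Suc j) (j + k) y = Q (x!k) y"
  unfolding codeword_law_def by simp

lemma codeword_law_codebook:
  "(\<lambda>i. Q (async_input (\<lambda>m j. cs!m!j) N star m l (Suc i))) = codeword_law Q star N (cs!m) l"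
  unfolding async_input_def codeword_law_def by auto

definition chernoff_weight ::
    "('x::finite \<Rightarrow> real) \<Rightarrow> ('x \<Rightarrow> 'y \<Rightarrow> real) \<Rightarrow> real \<Rightarrow> real \<Rightarrow> 'x \<Rightarrow> 'y \<Rightarrow> real" where
  "chernoff_weight P Q T s a y = exp (s * (T - ln (info_ratio P Q a y)))"

definition chernoff_letter ::
    "('x::finite \<Rightarrow> real) \<Rightarrow> ('x \<Rightarrow> 'y::finite \<Rightarrow> real) \<Rightarrow> real \<Rightarrow> real \<Rightarrow> 'x \<Rightarrow> real" where
  "chernoff_letter P Q T s a = (\<Sum>y\<in>UNIV. Q a y * chernoff_weight P Q T s a y)"

definition chernoff_mgf :: "('x::finite \<Rightarrow> real) \<Rightarrow> ('x \<Rightarrow> 'y::finite \<Rightarrow> real) \<Rightarrow> real \<Rightarrow> real \<Rightarrow> real" where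
  "chernoff_mgf P Q T s = (\<Sum>a\<in>UNIV. P a * chernoff_letter P Q T s a)"

lemma chernoff_weight_nonneg: "0 \<le> chernoff_weight P Q T s a y"
  unfolding chernoff_weight_def by simp

locale input_channel =
  fixes P :: "'x::finite \<Rightarrow> real" and Q :: "'x \<Rightarrow> 'y::finite \<Rightarrow> real"
  assumes P_nonneg: "\<And>a. 0 \<le> P a" and sum_P: "(\<Sum>a\<in>UNIV. P a) = 1" and dmc: "dmc Q"
begin

sublocale inputs: product_law "\<lambda>_. P"
  by unfold_locales (simp_all add: P_nonneg sum_P)

lemma Q_nonneg: "0 \<le> Q a y" using dmc unfolding dmc_def by auto

lemma sum_Q: "(\<Sum>y\<in>UNIV. Q a y) = 1" using dmc unfolding dmc_def by auto

lemma product_law_codeword_law: "product_law (codeword_law Q star N x l)"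
  unfolding codeword_law_def using dmc_product_law[OF dmc] by simp

lemma out_marginal_nonneg: "0 \<le> out_marginal P Q b"
  unfolding out_marginal_def by (auto intro!: sum_nonneg mult_nonneg_nonneg P_nonneg Q_nonneg)

lemma info_ratio_nonneg: "0 \<le> info_ratio P Q a b"
  unfolding info_ratio_def by (simp add: out_marginal_nonneg Q_nonneg)

lemma info_ratio_pos: "0 < P a \<Longrightarrow> 0 < Q a b \<Longrightarrow> 0 < info_ratio P Q a b"
proof -
  assume "0 < P a" "0 < Q a b"
  moreover have "P a * Q a b \<le> out_marginal P Q b"
    unfolding out_marginal_def by (rule member_le_sum) (auto intro!: mult_nonneg_nonneg P_nonneg Q_nonneg)
  ultimately show ?thesis
    unfolding info_ratio_def by (intro divide_pos_pos) (auto intro: order_less_le_trans[OF mult_pos_pos])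
qed

text \<open>Change of measure: an output word \<open>w\<close> that is independent of the codeword \<open>x\<close> passes the
  test with probability at most \<open>1/thr\<close>, because \<open>\<Sum>\<^sub>a P(a) Q(b|a) / P\<^sub>Y(b) \<le> 1\<close>.\<close>

lemma false_alarm_le:
  assumes "0 < thr"
  shows "(\<Sum>x\<in>{x::'x list. length x = N}. seq_prob (\<lambda>_. P) x * of_bool (info_test P Q N thr x w)) \<le> 1 / thr"
proof -
  have "(\<Sum>x\<in>{x::'x list. length x = N}. seq_prob (\<lambda>_. P) x * of_bool (info_test P Q N thr x w))
     \<le> (\<Sum>x\<in>{x::'x list. length x = N}. seq_prob (\<lambda>_. P) x * ((\<Prod>k<N. info_ratio P Q (x!k) (w!k)) / thr))"
    using assms by (intro sum_mono mult_left_mono inputs.seq_prob_nonneg)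
      (auto simp: info_test_def prod_nonneg info_ratio_nonneg)
  also have "\<dots> = (\<Sum>x\<in>{x::'x list. length x = N}. \<Prod>k<N. P (x!k) * info_ratio P Q (x!k) (w!k)) / thr"
    unfolding seq_prob_def sum_divide_distrib by (intro sum.cong refl) (simp add: prod.distrib)
  also have "\<dots> = (\<Prod>k<N. \<Sum>a\<in>UNIV. P a * info_ratio P Q a (w!k)) / thr"
    by (subst sum_lists_length_prod_UNIV) (rule refl)
  also have "\<dots> \<le> 1 / thr"
  proof -
    have "(\<Sum>a\<in>UNIV. P a * info_ratio P Q a b) = out_marginal P Q b / out_marginal P Q b" for b
      unfolding info_ratio_def out_marginal_def by (simp add: sum_divide_distrib[symmetric])
    then have "(\<Prod>k<N. \<Sum>a\<in>UNIV. P a * info_ratio P Q a (w!k)) \<le> 1"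
      by (intro prod_le_1) (simp add: out_marginal_nonneg)
    then show ?thesis using assms by (simp add: divide_right_mono)
  qed
  finally show ?thesis .
qed

definition miss_prob :: "nat \<Rightarrow> nat \<Rightarrow> real \<Rightarrow> 'x \<Rightarrow> 'x list \<Rightarrow> nat \<Rightarrow> real" where
  "miss_prob K N thr star x l = (\<Sum>ys\<in>{ys::'y list. length ys = K}.
     seq_prob (codeword_law Q star N x l) ys * of_bool (\<not> info_test P Q N thr x (take N (drop (l - 1) ys))))"

definition false_alarm_prob :: "nat \<Rightarrow> nat \<Rightarrow> real \<Rightarrow> 'x \<Rightarrow> 'x list \<Rightarrow> 'x list \<Rightarrow> nat \<Rightarrow> nat \<Rightarrow> real" where
  "false_alarm_prob K N thr star x x' l n = (\<Sum>ys\<in>{ys::'y list. length ys = K}.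
     seq_prob (codeword_law Q star N x l) ys * of_bool (info_test P Q N thr x' (take N (drop (n - N) ys))))"

lemma miss_prob_nonneg: "0 \<le> miss_prob K N thr star x l"
  unfolding miss_prob_def
  by (intro sum_nonneg mult_nonneg_nonneg product_law.seq_prob_nonneg[OF product_law_codeword_law]) simp

lemma false_alarm_prob_nonneg: "0 \<le> false_alarm_prob K N thr star x x' l n"
  unfolding false_alarm_prob_def
  by (intro sum_nonneg mult_nonneg_nonneg product_law.seq_prob_nonneg[OF product_law_codeword_law]) simp

text \<open>Chernoff: if the test fails then \<open>\<Sum> ln r < N T\<close>, so the product of the weights
  \<open>exp (s (T - ln r))\<close> is at least \<open>1\<close>. The positivity hypotheses exclude the junk value \<open>ln 0 = 0\<close>.\<close>

lemma test_fails_le_prod_chernoff_weight: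
  assumes ys: "length ys = K" and win: "j + N \<le> K"
    and P_pos: "\<And>k. k < N \<Longrightarrow> 0 < P (x!k)"
    and prob_pos: "0 < seq_prob (codeword_law Q star N x (Suc j)) ys"
    and s: "0 \<le> s"
  shows "of_bool (\<not> info_test P Q N (exp (real N * T)) x (take N (drop j ys)))
         \<le> (\<Prod>k<N. chernoff_weight P Q T s (x!k) (ys!(j + k)))"
proof (cases "info_test P Q N (exp (real N * T)) x (take N (drop j ys))")
  case True
  then show ?thesis by (simp add: prod_nonneg chernoff_weight_nonneg)
next
  case False
  let ?r = "\<lambda>k. info_ratio P Q (x!k) (ys!(j + k))"
  have r_pos: "0 < ?r k" if "k < N" for k
  proof -
    have "j + k \<in> {..<length ys}" using that win ys by simp
    then have "codeword_law Q star N x (Suc j) (j + k) (ys!(j + k)) \<noteq> 0"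
      using prob_pos unfolding seq_prob_def by (metis finite_lessThan less_irrefl prod_zero_iff)
    then have "0 < Q (x!k) (ys!(j + k))"
      using Q_nonneg[of "x!k" "ys!(j + k)"] by (simp add: codeword_law_window[OF that] order.strict_iff_order)
    then show ?thesis using info_ratio_pos P_pos that by blast
  qed
  have "(\<Prod>k<N. info_ratio P Q (x!k) (take N (drop j ys) ! k)) = (\<Prod>k<N. ?r k)"
    using win ys by (intro prod.cong) auto
  then have "(\<Prod>k<N. ?r k) < exp (real N * T)"
    using False unfolding info_test_def by (simp add: not_le)
  moreover have "0 < (\<Prod>k<N. ?r k)" using r_pos by (intro prod_pos) simp
  ultimately have "ln (\<Prod>k<N. ?r k) < real N * T"
    using ln_less_cancel_iff[of "\<Prod>k<N. ?r k" "exp (real N * T)"] by simp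
  then have "(\<Sum>k<N. ln (?r k)) < real N * T"
    using r_pos by (subst (asm) ln_prod) (auto simp: order.strict_iff_order)
  then have "1 \<le> exp (s * (real N * T - (\<Sum>k<N. ln (?r k))))"
    using s by simp
  also have "\<dots> = (\<Prod>k<N. chernoff_weight P Q T s (x!k) (ys!(j + k)))"
    unfolding chernoff_weight_def
    by (simp add: exp_sum[symmetric] sum_distrib_left[symmetric] sum_subtractf)
  finally show ?thesis using False by simp
qed

lemma sum_seq_prob_prod_chernoff_weight:
  assumes win: "j + N \<le> K"
  shows "(\<Sum>ys\<in>{ys::'y list. length ys = K}. seq_prob (codeword_law Q star N x (Suc j)) ys
           * (\<Prod>k<N. chernoff_weight P Q T s (x!k) (ys!(j + k))))
       = (\<Prod>k<N. chernoff_letter P Q T s (x!k))"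
proof -
  define g where "g i y = codeword_law Q star N x (Suc j) i y
      * (if j \<le> i \<and> i < j + N then chernoff_weight P Q T s (x!(i - j)) y else 1)" for i y
  have "seq_prob (codeword_law Q star N x (Suc j)) ys * (\<Prod>k<N. chernoff_weight P Q T s (x!k) (ys!(j + k)))
      = (\<Prod>i<K. g i (ys!i))" if "length ys = K" for ys
    using that prod_lessThan_window[OF win, of "\<lambda>i. chernoff_weight P Q T s (x!(i - j)) (ys!i)"]
    unfolding g_def seq_prob_def prod.distrib by (simp add: if_distrib cong: if_cong)
  then have "(\<Sum>ys\<in>{ys::'y list. length ys = K}. seq_prob (codeword_law Q star N x (Suc j)) ys
           * (\<Prod>k<N. chernoff_weight P Q T s (x!k) (ys!(j + k))))
      = (\<Prod>i<K. \<Sum>y\<in>UNIV. g i y)"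
    by (simp add: sum_lists_length_prod_UNIV[symmetric])
  also have "\<dots> = (\<Prod>i<K. if j \<le> i \<and> i < j + N then chernoff_letter P Q T s (x!(i - j)) else 1)"
    by (intro prod.cong refl)
      (auto simp: g_def codeword_law_def chernoff_letter_def sum_Q Suc_diff_le)
  also have "\<dots> = (\<Prod>k<N. chernoff_letter P Q T s (x!k))"
    using prod_lessThan_window[OF win, of "\<lambda>i. chernoff_letter P Q T s (x!(i - j))"] by simp
  finally show ?thesis .
qed

lemma miss_prob_le:
  assumes "j + N \<le> K" and "0 \<le> s"
  shows "(\<Sum>x\<in>{x::'x list. length x = N}. seq_prob (\<lambda>_. P) x * miss_prob K N (exp (real N * T)) star x (Suc j))
     \<le> chernoff_mgf P Q T s ^ N"
proof -
  have pointwise: "seq_prob (\<lambda>_. P) x * miss_prob K N (exp (real N * T)) star x (Suc j)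
     \<le> (\<Prod>k<N. P (x!k) * chernoff_letter P Q T s (x!k))" if "length x = N" for x
  proof (cases "seq_prob (\<lambda>_. P) x = 0")
    case False
    then have P_pos: "0 < P (x!k)" if "k < N" for k
      using \<open>length x = N\<close> that P_nonneg[of "x!k"] unfolding seq_prob_def by (auto simp: order.strict_iff_order)
    have "seq_prob (codeword_law Q star N x (Suc j)) ys
          * of_bool (\<not> info_test P Q N (exp (real N * T)) x (take N (drop j ys)))
        \<le> seq_prob (codeword_law Q star N x (Suc j)) ys * (\<Prod>k<N. chernoff_weight P Q T s (x!k) (ys!(j + k)))"
      if "length ys = K" for ys
    proof (cases "seq_prob (codeword_law Q star N x (Suc j)) ys = 0")
      case False
      then show ?thesis
        using that assms P_pos product_law.seq_prob_nonneg[OF product_law_codeword_law]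
        by (intro mult_left_mono test_fails_le_prod_chernoff_weight) (auto simp: order.strict_iff_order)
    qed simp
    then have "miss_prob K N (exp (real N * T)) star x (Suc j)
        \<le> (\<Sum>ys\<in>{ys::'y list. length ys = K}. seq_prob (codeword_law Q star N x (Suc j)) ys
               * (\<Prod>k<N. chernoff_weight P Q T s (x!k) (ys!(j + k))))"
      unfolding miss_prob_def by (intro sum_mono) simp
    then have "seq_prob (\<lambda>_. P) x * miss_prob K N (exp (real N * T)) star x (Suc j)
        \<le> seq_prob (\<lambda>_. P) x * (\<Prod>k<N. chernoff_letter P Q T s (x!k))"
      using assms(1) by (simp add: sum_seq_prob_prod_chernoff_weight inputs.seq_prob_nonneg mult_left_mono)
    then show ?thesis
      using \<open>length x = N\<close> by (simp add: seq_prob_def prod.distrib)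
  qed (simp add: prod_nonneg P_nonneg chernoff_letter_def sum_nonneg Q_nonneg chernoff_weight_nonneg)
  then have "(\<Sum>x\<in>{x::'x list. length x = N}. seq_prob (\<lambda>_. P) x * miss_prob K N (exp (real N * T)) star x (Suc j))
     \<le> (\<Sum>x\<in>{x::'x list. length x = N}. \<Prod>k<N. P (x!k) * chernoff_letter P Q T s (x!k))"
    by (intro sum_mono) simp
  also have "\<dots> = chernoff_mgf P Q T s ^ N"
    by (subst sum_lists_length_prod_UNIV[where f="\<lambda>k a. P a * chernoff_letter P Q T s a"])
      (simp add: chernoff_mgf_def)
  finally show ?thesis .
qed

lemma chernoff_mgf_nonneg: "0 \<le> chernoff_mgf P Q T s"
  unfolding chernoff_mgf_def chernoff_letter_def
  by (auto intro!: sum_nonneg mult_nonneg_nonneg P_nonneg Q_nonneg chernoff_weight_nonneg)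

lemma chernoff_mgf_eq:
  "chernoff_mgf P Q T s = (\<Sum>a\<in>UNIV. \<Sum>y\<in>UNIV. P a * Q a y * exp (s * (T - ln (info_ratio P Q a y))))"
  unfolding chernoff_mgf_def chernoff_letter_def chernoff_weight_def by (simp add: sum_distrib_left mult_ac)

lemma chernoff_mgf_0: "chernoff_mgf P Q T 0 = 1"
  by (simp add: chernoff_mgf_eq sum_distrib_left[symmetric] sum_Q sum_P)

lemma mutual_info_eq: "mutual_info P Q = (\<Sum>a\<in>UNIV. \<Sum>y\<in>UNIV. P a * Q a y * ln (info_ratio P Q a y))"
  unfolding mutual_info_def info_ratio_def out_marginal_def by (intro sum.cong refl) auto

lemma chernoff_mgf_has_derivative_0: "(chernoff_mgf P Q T has_real_derivative T - mutual_info P Q) (at 0)"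
proof -
  have "((\<lambda>s. \<Sum>a\<in>UNIV. \<Sum>y\<in>UNIV. P a * Q a y * exp (s * (T - ln (info_ratio P Q a y))))
      has_real_derivative (\<Sum>a\<in>UNIV. \<Sum>y\<in>UNIV. P a * Q a y * (T - ln (info_ratio P Q a y)))) (at 0)"
    by (rule DERIV_cong, (rule derivative_eq_intros refl | simp)+, simp add: mult_ac)
  also have "(\<Sum>a\<in>UNIV. \<Sum>y\<in>UNIV. P a * Q a y * (T - ln (info_ratio P Q a y))) = T - mutual_info P Q"
    by (simp add: mutual_info_eq right_diff_distrib sum_subtractf sum_distrib_left[symmetric]
        sum_distrib_right[symmetric] sum_Q sum_P)
  finally show ?thesis by (simp add: chernoff_mgf_eq[abs_def])
qed

lemma exists_chernoff_mgf_less_1: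
  assumes "T < mutual_info P Q"
  shows "\<exists>s>0. chernoff_mgf P Q T s < 1"
proof -
  obtain d where "d > 0" "\<And>h. h > 0 \<Longrightarrow> h < d \<Longrightarrow> chernoff_mgf P Q T (0 + h) < chernoff_mgf P Q T 0"
    using DERIV_neg_dec_right[OF chernoff_mgf_has_derivative_0] assms by force
  then show ?thesis using chernoff_mgf_0[of T] by (intro exI[of _ "d/2"]) auto
qed

section \<open>The sliding-window decoder\<close>

definition window_match :: "nat \<Rightarrow> real \<Rightarrow> 'x list list \<Rightarrow> 'y list \<Rightarrow> nat \<Rightarrow> bool" where
  "window_match N thr cs zs m \<longleftrightarrow> N \<le> length zs \<and> info_test P Q N thr (cs!m) (drop (length zs - N) zs)"

definition window_stop :: "nat \<Rightarrow> nat \<Rightarrow> nat \<Rightarrow> real \<Rightarrow> 'x list list \<Rightarrow> 'y list \<Rightarrow> bool" where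
  "window_stop K M N thr cs zs \<longleftrightarrow> K \<le> length zs \<or> (\<exists>m<M. window_match N thr cs zs m)"

definition window_decode :: "nat \<Rightarrow> nat \<Rightarrow> real \<Rightarrow> 'x list list \<Rightarrow> 'y list \<Rightarrow> nat" where
  "window_decode M N thr cs zs =
     (if \<exists>m<M. window_match N thr cs zs m then LEAST m. m < M \<and> window_match N thr cs zs m else 0)"

lemma window_match_take:
  assumes "length ys = K" "N \<le> n" "n \<le> K"
  shows "window_match N thr cs (take n ys) m \<longleftrightarrow> info_test P Q N thr (cs!m) (take N (drop (n - N) ys))"
  using assms unfolding window_match_def by (simp add: drop_take)

lemma window_stop_at_K: "length zs = K \<Longrightarrow> window_stop K M N thr cs zs"
  unfolding window_stop_def by simp

context
  fixes K M N :: nat and thr :: real and cs :: "'x list list" and m l :: nat and ys :: "'y list"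
  assumes m: "m < M" and l: "1 \<le> l" "l + N \<le> Suc K" and ys: "length ys = K"
begin

abbreviation (input) "stop \<equiv> window_stop K M N thr cs"

abbreviation (input) "hit \<equiv> info_test P Q N thr (cs!m) (take N (drop (l - 1) ys))"

lemma stop_time_window_le_K: "stop_time stop ys \<le> K"
  using stop_time_le[where stop=stop and K=K, OF window_stop_at_K ys] .

lemma window_match_of_hit: "hit \<Longrightarrow> window_match N thr cs (take (l + N - 1) ys) m"
  using window_match_take[OF ys, of N "l + N - 1"] l by simp

lemma stop_time_window_le_of_hit:
  assumes hit
  shows "stop_time stop ys \<le> l + N - 1"
proof -
  have "window_match N thr cs (take (l + N - 1) ys) m"
    using window_match_of_hit[OF assms] .
  then have "stop (take (l + N - 1) ys)" unfolding window_stop_def using m by blast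
  then show ?thesis unfolding stop_time_def by (rule Least_le)
qed

lemma window_match_stop_time_imp_eq:
  assumes no_false_alarm: "\<And>n m'. N \<le> n \<Longrightarrow> n \<le> K \<Longrightarrow> m' < M \<Longrightarrow> m' \<noteq> m \<Longrightarrow>
                 \<not> info_test P Q N thr (cs!m') (take N (drop (n - N) ys))"
    and "m' < M" and match: "window_match N thr cs (take (stop_time stop ys) ys) m'"
  shows "m' = m"
proof (rule ccontr)
  assume "m' \<noteq> m"
  have "N \<le> stop_time stop ys" using match unfolding window_match_def by simp
  then have "info_test P Q N thr (cs!m') (take N (drop (stop_time stop ys - N) ys))"
    using window_match_take[OF ys _ stop_time_window_le_K] match by simp
  then show False
    using no_false_alarm[OF \<open>N \<le> stop_time stop ys\<close> stop_time_window_le_K \<open>m' < M\<close> \<open>m' \<noteq> m\<close>] by simp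
qed

lemma window_decode_eq:
  assumes hit
    and no_false_alarm: "\<And>n m'. N \<le> n \<Longrightarrow> n \<le> K \<Longrightarrow> m' < M \<Longrightarrow> m' \<noteq> m \<Longrightarrow>
                 \<not> info_test P Q N thr (cs!m') (take N (drop (n - N) ys))"
  shows "window_decode M N thr cs (take (stop_time stop ys) ys) = m"
proof -
  define t where "t = stop_time stop ys"
  note only_m = window_match_stop_time_imp_eq[OF no_false_alarm, folded t_def]
  have match: "window_match N thr cs (take t ys) m"
  proof (cases "\<exists>m'<M. window_match N thr cs (take t ys) m'")
    case True
    then obtain m' where "m' < M" "window_match N thr cs (take t ys) m'" by blast
    then show ?thesis using only_m by simp
  next
    case False
    have "window_stop K M N thr cs (take t ys)"
      unfolding t_def by (rule stop_take_stop_time[where stop=stop and K=K, OF window_stop_at_K ys])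
    then have "K \<le> t"
      using False ys unfolding window_stop_def by auto
    then have "t = l + N - 1"
      using stop_time_window_le_of_hit[OF assms(1)] l unfolding t_def by simp
    then show ?thesis
      using window_match_of_hit[OF assms(1)] by simp
  qed
  have "(LEAST m'. m' < M \<and> window_match N thr cs (take t ys) m') = m"
  proof (rule Least_equality)
    show "m < M \<and> window_match N thr cs (take t ys) m" using m match by simp
  next
    fix m' assume "m' < M \<and> window_match N thr cs (take t ys) m'"
    then have "m' = m" using only_m by blast
    then show "m \<le> m'" by simp
  qed
  then have "window_decode M N thr cs (take t ys) = m"
    unfolding window_decode_def using m match by auto
  then show ?thesis unfolding t_def .
qed

lemma decode_error_le:
  "of_bool (window_decode M N thr cs (take (stop_time stop ys) ys) \<noteq> m)
   \<le> of_bool (\<not> hit)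
     + (\<Sum>n\<in>{N..K}. \<Sum>m'\<in>{..<M} - {m}. of_bool (info_test P Q N thr (cs!m') (take N (drop (n - N) ys))) :: real)"
proof (cases "window_decode M N thr cs (take (stop_time stop ys) ys) \<noteq> m \<and> hit")
  case True
  have "\<exists>n m'. N \<le> n \<and> n \<le> K \<and> m' < M \<and> m' \<noteq> m \<and> info_test P Q N thr (cs!m') (take N (drop (n - N) ys))"
  proof (rule ccontr)
    assume "\<not> ?thesis"
    then have "window_decode M N thr cs (take (stop_time stop ys) ys) = m"
      using True by (intro window_decode_eq) auto
    then show False using True by simp
  qed
  then obtain n m' where nm: "N \<le> n" "n \<le> K" "m' < M" "m' \<noteq> m"
    "info_test P Q N thr (cs!m') (take N (drop (n - N) ys))"
    by blast
  then have "1 \<le> (\<Sum>m'\<in>{..<M} - {m}. of_bool (info_test P Q N thr (cs!m') (take N (drop (n - N) ys))) :: real)"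
    by (intro member_le_sum[of m', THEN order_trans[rotated]]) auto
  also have "\<dots> \<le> (\<Sum>n\<in>{N..K}. \<Sum>m'\<in>{..<M} - {m}. of_bool (info_test P Q N thr (cs!m') (take N (drop (n - N) ys))))"
    using nm by (intro member_le_sum[of n] sum_nonneg) auto
  finally show ?thesis using True by simp
next
  case False
  have "0 \<le> (\<Sum>n\<in>{N..K}. \<Sum>m'\<in>{..<M} - {m}.
           of_bool (info_test P Q N thr (cs!m') (take N (drop (n - N) ys))) :: real)"
    by (intro sum_nonneg) simp
  moreover have "of_bool (window_decode M N thr cs (take (stop_time stop ys) ys) \<noteq> m) \<le> (of_bool (\<not> hit) :: real)"
    using False by auto
  ultimately show ?thesis by linarith
qed

lemma delay_le: "real (stop_time stop ys - l) \<le> real (N - 1) + real K * of_bool (\<not> hit)"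
proof (cases hit)
  case True
  then have "stop_time stop ys - l \<le> N - 1"
    using stop_time_window_le_of_hit by simp
  then show ?thesis using True by simp
next
  case False
  then show ?thesis using stop_time_window_le_K by simp
qed

end

lemma err_prob_codebook_le:
  assumes "m < M" "1 \<le> l" "l + N \<le> Suc K"
  shows "err_prob Q (\<lambda>m j. cs!m!j) N star (window_stop K M N thr cs) (window_decode M N thr cs) m l
   \<le> ennreal (miss_prob K N thr star (cs!m) l
        + (\<Sum>n\<in>{N..K}. \<Sum>m'\<in>{..<M} - {m}. false_alarm_prob K N thr star (cs!m) (cs!m') l n))"
proof -
  interpret product_law "codeword_law Q star N (cs!m) l" by (rule product_law_codeword_law)
  have "err_prob Q (\<lambda>m j. cs!m!j) N star (window_stop K M N thr cs) (window_decode M N thr cs) m l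
     = ennreal (\<Sum>ys\<in>{ys::'y list. length ys = K}. seq_prob (codeword_law Q star N (cs!m) l) ys
         * of_bool (window_decode M N thr cs (take (stop_time (window_stop K M N thr cs) ys) ys) \<noteq> m))"
    using err_prob_eq_sum[where stop="window_stop K M N thr cs" and K=K and c="\<lambda>m j. cs!m!j"
        and N=N and star=star and dec="window_decode M N thr cs" and m=m and l=l, OF dmc window_stop_at_K]
    unfolding codeword_law_codebook .
  also have "\<dots> \<le> ennreal (\<Sum>ys\<in>{ys::'y list. length ys = K}. seq_prob (codeword_law Q star N (cs!m) l) ys
         * (of_bool (\<not> info_test P Q N thr (cs!m) (take N (drop (l - 1) ys)))
            + (\<Sum>n\<in>{N..K}. \<Sum>m'\<in>{..<M} - {m}. of_bool (info_test P Q N thr (cs!m') (take N (drop (n - N) ys))))))"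
    using assms by (intro ennreal_leI sum_mono mult_left_mono seq_prob_nonneg decode_error_le) auto
  also have "\<dots> = ennreal (miss_prob K N thr star (cs!m) l
        + (\<Sum>n\<in>{N..K}. \<Sum>m'\<in>{..<M} - {m}. false_alarm_prob K N thr star (cs!m) (cs!m') l n))"
    unfolding miss_prob_def false_alarm_prob_def distrib_left sum.distrib sum_distrib_left
    by (simp only: sum.swap[of _ "{ys::'y list. length ys = K}"])
  finally show ?thesis .
qed

lemma exp_delay_codebook_le:
  assumes "m < M" "1 \<le> l" "l + N \<le> Suc K"
  shows "exp_delay Q (\<lambda>m j. cs!m!j) N star (window_stop K M N thr cs) m l
   \<le> ennreal (real (N - 1) + real K * miss_prob K N thr star (cs!m) l)"
proof -
  interpret product_law "codeword_law Q star N (cs!m) l" by (rule product_law_codeword_law)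
  have "exp_delay Q (\<lambda>m j. cs!m!j) N star (window_stop K M N thr cs) m l
     = ennreal (\<Sum>ys\<in>{ys::'y list. length ys = K}. seq_prob (codeword_law Q star N (cs!m) l) ys
         * real (stop_time (window_stop K M N thr cs) ys - l))"
    using exp_delay_eq_sum[where stop="window_stop K M N thr cs" and K=K and c="\<lambda>m j. cs!m!j"
        and N=N and star=star and m=m and l=l, OF dmc window_stop_at_K]
    unfolding codeword_law_codebook .
  also have "\<dots> \<le> ennreal (\<Sum>ys\<in>{ys::'y list. length ys = K}. seq_prob (codeword_law Q star N (cs!m) l) ys
         * (real (N - 1) + real K * of_bool (\<not> info_test P Q N thr (cs!m) (take N (drop (l - 1) ys)))))"
    using assms by (intro ennreal_leI sum_mono mult_left_mono seq_prob_nonneg delay_le) auto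
  also have "\<dots> = ennreal (real (N - 1) + real K * miss_prob K N thr star (cs!m) l)"
    unfolding miss_prob_def distrib_left sum.distrib
    by (simp add: sum_distrib_left[symmetric] sum_distrib_right[symmetric] sum_seq_prob mult_ac)
  finally show ?thesis .
qed

section \<open>Random coding\<close>

lemma sum_codeword_pair_false_alarm_prob_le:
  assumes "N \<le> n" "0 < thr"
  shows "(\<Sum>a\<in>{x::'x list. length x = N}. \<Sum>b\<in>{x::'x list. length x = N}.
            seq_prob (\<lambda>_. P) a * seq_prob (\<lambda>_. P) b * false_alarm_prob K N thr star a b l n) \<le> 1 / thr"
proof -
  have inner: "(\<Sum>b\<in>{x::'x list. length x = N}. seq_prob (\<lambda>_. P) b * false_alarm_prob K N thr star a b l n)
      \<le> 1 / thr" for a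
  proof -
    interpret product_law "codeword_law Q star N a l" by (rule product_law_codeword_law)
    have "(\<Sum>b\<in>{x::'x list. length x = N}. seq_prob (\<lambda>_. P) b * false_alarm_prob K N thr star a b l n)
       = (\<Sum>ys\<in>{ys::'y list. length ys = K}. seq_prob (codeword_law Q star N a l) ys *
           (\<Sum>b\<in>{x::'x list. length x = N}. seq_prob (\<lambda>_. P) b
              * of_bool (info_test P Q N thr b (take N (drop (n - N) ys)))))"
      unfolding false_alarm_prob_def sum_distrib_left by (subst sum.swap) (simp add: mult_ac)
    also have "\<dots> \<le> (\<Sum>ys\<in>{ys::'y list. length ys = K}. seq_prob (codeword_law Q star N a l) ys * (1 / thr))"
      by (intro sum_mono mult_left_mono seq_prob_nonneg false_alarm_le assms(2))
    also have "\<dots> = 1 / thr" by (simp add: sum_divide_distrib[symmetric] sum_seq_prob)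
    finally show ?thesis .
  qed
  have "(\<Sum>a\<in>{x::'x list. length x = N}. \<Sum>b\<in>{x::'x list. length x = N}.
            seq_prob (\<lambda>_. P) a * seq_prob (\<lambda>_. P) b * false_alarm_prob K N thr star a b l n)
      = (\<Sum>a\<in>{x::'x list. length x = N}. seq_prob (\<lambda>_. P) a *
           (\<Sum>b\<in>{x::'x list. length x = N}. seq_prob (\<lambda>_. P) b * false_alarm_prob K N thr star a b l n))"
    by (simp add: sum_distrib_left mult_ac)
  also have "\<dots> \<le> (\<Sum>a\<in>{x::'x list. length x = N}. seq_prob (\<lambda>_. P) a * (1 / thr))"
    by (intro sum_mono mult_left_mono inner inputs.seq_prob_nonneg)
  also have "\<dots> = 1 / thr" by (simp add: sum_divide_distrib[symmetric] inputs.sum_seq_prob)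
  finally show ?thesis .
qed

definition codebook_error_bound :: "nat \<Rightarrow> nat \<Rightarrow> nat \<Rightarrow> nat \<Rightarrow> real \<Rightarrow> 'x \<Rightarrow> 'x list list \<Rightarrow> real" where
  "codebook_error_bound A M K N thr star cs = (\<Sum>m<M. \<Sum>l\<in>{1..A}. miss_prob K N thr star (cs!m) l
      + (\<Sum>n\<in>{N..K}. \<Sum>m'\<in>{..<M} - {m}. false_alarm_prob K N thr star (cs!m) (cs!m') l n))"

lemma sum_codebook_miss_prob_le:
  assumes "m < M" "2 \<le> M" "1 \<le> l" "l + N \<le> Suc K" "0 \<le> s"
  shows "(\<Sum>cs\<in>{cs. set cs \<subseteq> {x. length x = N} \<and> length cs = M}.
            (\<Prod>i<M. seq_prob (\<lambda>_. P) (cs!i)) * miss_prob K N (exp (real N * T)) star (cs!m) l)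
     \<le> chernoff_mgf P Q T s ^ N"
proof -
  have "l - 1 + N \<le> K" "Suc (l - 1) = l" using assms by auto
  have "(\<Sum>cs\<in>{cs. set cs \<subseteq> {x. length x = N} \<and> length cs = M}.
            (\<Prod>i<M. seq_prob (\<lambda>_. P) (cs!i)) * miss_prob K N (exp (real N * T)) star (cs!m) l)
      = (\<Sum>x\<in>{x::'x list. length x = N}. seq_prob (\<lambda>_. P) x * miss_prob K N (exp (real N * T)) star x l)"
    by (rule sum_lists_length_nth[OF finite_lists_length_UNIV inputs.sum_seq_prob assms(1,2)])
  also have "\<dots> \<le> chernoff_mgf P Q T s ^ N"
    using miss_prob_le[OF \<open>l - 1 + N \<le> K\<close> assms(5), of T star] \<open>Suc (l - 1) = l\<close> by simp
  finally show ?thesis .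
qed

lemma sum_codebook_false_alarm_prob_le:
  assumes "m < M" "m' < M" "m \<noteq> m'" "N \<le> n" "0 < thr"
  shows "(\<Sum>cs\<in>{cs. set cs \<subseteq> {x. length x = N} \<and> length cs = M}.
            (\<Prod>i<M. seq_prob (\<lambda>_. P) (cs!i)) * false_alarm_prob K N thr star (cs!m) (cs!m') l n)
     \<le> 1 / thr"
proof -
  have "(\<Sum>cs\<in>{cs. set cs \<subseteq> {x. length x = N} \<and> length cs = M}.
            (\<Prod>i<M. seq_prob (\<lambda>_. P) (cs!i)) * false_alarm_prob K N thr star (cs!m) (cs!m') l n)
     = (\<Sum>a\<in>{x::'x list. length x = N}. \<Sum>b\<in>{x. length x = N}.
          seq_prob (\<lambda>_. P) a * seq_prob (\<lambda>_. P) b * false_alarm_prob K N thr star a b l n)"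
    by (rule sum_lists_length_nth_pair[OF finite_lists_length_UNIV inputs.sum_seq_prob assms(1-3)])
  also have "\<dots> \<le> 1 / thr"
    using assms(4,5) by (rule sum_codeword_pair_false_alarm_prob_le)
  finally show ?thesis .
qed

lemma expected_codebook_error_bound_le:
  assumes "1 \<le> N" "2 \<le> M" "K = A + N - 1" "0 \<le> s"
  shows "(\<Sum>cs\<in>{cs. set cs \<subseteq> {x. length x = N} \<and> length cs = M}.
            (\<Prod>i<M. seq_prob (\<lambda>_. P) (cs!i)) * codebook_error_bound A M K N (exp (real N * T)) star cs)
     \<le> real M * real A * (chernoff_mgf P Q T s ^ N + real K * real M / exp (real N * T))"
proof -
  define thr where "thr = exp (real N * T)"
  let ?C = "{cs. set cs \<subseteq> {x::'x list. length x = N} \<and> length cs = M}"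
  let ?w = "\<lambda>cs. \<Prod>i<M. seq_prob (\<lambda>_. P) (cs!i)"
  have "(\<Sum>cs\<in>?C. ?w cs * codebook_error_bound A M K N thr star cs)
     = (\<Sum>m<M. \<Sum>l\<in>{1..A}. (\<Sum>cs\<in>?C. ?w cs * miss_prob K N thr star (cs!m) l)
        + (\<Sum>n\<in>{N..K}. \<Sum>m'\<in>{..<M} - {m}. \<Sum>cs\<in>?C. ?w cs * false_alarm_prob K N thr star (cs!m) (cs!m') l n))"
    unfolding codebook_error_bound_def distrib_left sum.distrib sum_distrib_left
    by (simp only: sum.swap[of _ ?C])
  also have "\<dots> \<le> (\<Sum>m<M. \<Sum>l\<in>{1..A}. chernoff_mgf P Q T s ^ N + (\<Sum>n\<in>{N..K}. \<Sum>m'\<in>{..<M} - {m}. 1 / thr))"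
    using assms unfolding thr_def
    by (intro sum_mono add_mono sum_codebook_miss_prob_le sum_codebook_false_alarm_prob_le) auto
  also have "\<dots> = real M * real A * (chernoff_mgf P Q T s ^ N + real (card {N..K}) * real (M - 1) / thr)"
    using assms(2) by (simp add: card_Diff_singleton_if of_nat_diff)
  also have "\<dots> \<le> real M * real A * (chernoff_mgf P Q T s ^ N + real K * real M / thr)"
    using assms(1,3) unfolding thr_def
    by (intro mult_left_mono add_left_mono divide_right_mono mult_mono) auto
  finally show ?thesis unfolding thr_def .
qed

lemma codebook_error_terms_nonneg:
  "0 \<le> miss_prob K N thr star (cs!m) l
        + (\<Sum>n\<in>{N..K}. \<Sum>m'\<in>{..<M} - {m}. false_alarm_prob K N thr star (cs!m) (cs!m') l n)"
  by (intro add_nonneg_nonneg sum_nonneg miss_prob_nonneg false_alarm_prob_nonneg)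

context
  fixes A M K N :: nat and thr :: real and star :: 'x and cs :: "'x list list"
  assumes A: "1 \<le> A" and M: "1 \<le> M" and K: "K = A + N - 1"
begin

lemma avg_err_le_codebook_error_bound:
  "avg_err Q star A M N (\<lambda>m j. cs!m!j) (window_stop K M N thr cs) (window_decode M N thr cs)
   \<le> ennreal (codebook_error_bound A M K N thr star cs / real (A * M))"
proof -
  have "avg_err Q star A M N (\<lambda>m j. cs!m!j) (window_stop K M N thr cs) (window_decode M N thr cs)
     \<le> (\<Sum>m<M. \<Sum>l\<in>{1..A}. ennreal (miss_prob K N thr star (cs!m) l
          + (\<Sum>n\<in>{N..K}. \<Sum>m'\<in>{..<M} - {m}. false_alarm_prob K N thr star (cs!m) (cs!m') l n)))
        / ennreal (real (A * M))"
    unfolding avg_err_def using A K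
    by (intro divide_right_mono_ennreal sum_mono err_prob_codebook_le) auto
  also have "\<dots> = ennreal (codebook_error_bound A M K N thr star cs / real (A * M))"
    unfolding codebook_error_bound_def using A M
    by (simp add: codebook_error_terms_nonneg sum_nonneg divide_ennreal)
  finally show ?thesis .
qed

lemma avg_delay_le_codebook_error_bound:
  "avg_delay Q star A M N (\<lambda>m j. cs!m!j) (window_stop K M N thr cs)
   \<le> ennreal (real (N - 1) + real K * (codebook_error_bound A M K N thr star cs / real (A * M)))"
proof -
  have AM: "0 < real (A * M)" using A M by simp
  have "avg_delay Q star A M N (\<lambda>m j. cs!m!j) (window_stop K M N thr cs)
     \<le> (\<Sum>m<M. \<Sum>l\<in>{1..A}. ennreal (real (N - 1) + real K * miss_prob K N thr star (cs!m) l))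
        / ennreal (real (A * M))"
    unfolding avg_delay_def using A K
    by (intro divide_right_mono_ennreal sum_mono exp_delay_codebook_le) auto
  also have "\<dots> = ennreal ((\<Sum>m<M. \<Sum>l\<in>{1..A}. real (N - 1) + real K * miss_prob K N thr star (cs!m) l)
        / real (A * M))"
    using AM by (simp add: miss_prob_nonneg sum_nonneg divide_ennreal del: ennreal_plus)
  also have "\<dots> \<le> ennreal (real (N - 1) + real K * (codebook_error_bound A M K N thr star cs / real (A * M)))"
  proof (intro ennreal_leI)
    have "(\<Sum>m<M. \<Sum>l\<in>{1..A}. miss_prob K N thr star (cs!m) l) \<le> codebook_error_bound A M K N thr star cs"
      unfolding codebook_error_bound_def by (intro sum_mono) (simp add: sum_nonneg false_alarm_prob_nonneg)
    then have "(\<Sum>m<M. \<Sum>l\<in>{1..A}. real (N - 1) + real K * miss_prob K N thr star (cs!m) l)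
        \<le> real (A * M) * real (N - 1) + real K * codebook_error_bound A M K N thr star cs"
      by (simp add: sum.distrib sum_distrib_left[symmetric] mult_left_mono)
    then show "(\<Sum>m<M. \<Sum>l\<in>{1..A}. real (N - 1) + real K * miss_prob K N thr star (cs!m) l) / real (A * M)
        \<le> real (N - 1) + real K * (codebook_error_bound A M K N thr star cs / real (A * M))"
      using AM by (simp add: divide_le_eq algebra_simps)
  qed
  finally show ?thesis .
qed

end

lemma exists_code_le:
  fixes star :: 'x and T s :: real
  assumes "1 \<le> N" "1 \<le> A" "2 \<le> M" "0 \<le> s"
  defines "K \<equiv> A + N - 1"
  defines "\<delta> \<equiv> chernoff_mgf P Q T s ^ N + real K * real M / exp (real N * T)"
  shows "\<exists>(c::nat \<Rightarrow> nat \<Rightarrow> 'x) (stop::'y list \<Rightarrow> bool) (dec::'y list \<Rightarrow> nat).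
           avg_err Q star A M N c stop dec \<le> ennreal \<delta> \<and>
           avg_delay Q star A M N c stop \<le> ennreal (real (N - 1) + real K * \<delta>)"
proof -
  let ?C = "{cs. set cs \<subseteq> {x::'x list. length x = N} \<and> length cs = M}"
  let ?w = "\<lambda>cs. \<Prod>i<M. seq_prob (\<lambda>_. P) (cs!i)"
  have K: "K = A + N - 1" unfolding K_def ..
  have finite: "finite ?C" by (rule finite_lists_length_eq) simp
  have weights: "(\<Sum>cs\<in>?C. ?w cs) = 1"
    by (subst sum_lists_length_prod[OF finite_lists_length_UNIV, where f="\<lambda>i x. seq_prob (\<lambda>_. P) x"])
      (simp add: inputs.sum_seq_prob)
  have "0 \<le> ?w cs" for cs by (intro prod_nonneg) (simp add: inputs.seq_prob_nonneg)
  from exists_le_of_weighted_sum_le[OF finite this weights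
      expected_codebook_error_bound_le[OF assms(1,3) K assms(4), of T star]]
  obtain cs where "codebook_error_bound A M K N (exp (real N * T)) star cs \<le> real M * real A * \<delta>"
    unfolding \<delta>_def by blast
  then have bound: "codebook_error_bound A M K N (exp (real N * T)) star cs / real (A * M) \<le> \<delta>"
    using assms(2,3) by (simp add: divide_le_eq mult_ac)
  have A: "1 \<le> A" and M: "1 \<le> M" using assms(2,3) by auto
  have "avg_err Q star A M N (\<lambda>m j. cs!m!j) (window_stop K M N (exp (real N * T)) cs)
      (window_decode M N (exp (real N * T)) cs) \<le> ennreal \<delta>"
    using avg_err_le_codebook_error_bound[OF A M K] bound by (meson ennreal_leI order_trans)
  moreover have "avg_delay Q star A M N (\<lambda>m j. cs!m!j) (window_stop K M N (exp (real N * T)) cs)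
      \<le> ennreal (real (N - 1) + real K * \<delta>)"
    using avg_delay_le_codebook_error_bound[OF A M K] bound
    by (meson ennreal_leI order_trans add_left_mono mult_left_mono of_nat_0_le_iff)
  ultimately show ?thesis by blast
qed

end

section \<open>Choice of the parameters\<close>

lemma exists_input_distr_mutual_info_gt:
  fixes Q :: "'x::finite \<Rightarrow> 'y::finite \<Rightarrow> real"
  assumes "R < capacity Q"
  shows "\<exists>P\<in>input_distrs. R < mutual_info P Q"
proof (cases "bdd_above ((\<lambda>P. mutual_info P Q) ` input_distrs)")
  case True
  have "(\<lambda>x. of_bool (x = undefined)) \<in> (input_distrs :: ('x \<Rightarrow> real) set)"
    unfolding input_distrs_def by simp
  then have "input_distrs \<noteq> ({} :: ('x \<Rightarrow> real) set)" by blast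
  then show ?thesis using assms less_cSUP_iff[OF _ True] unfolding capacity_def by blast
next
  case False
  then have "\<not> (\<forall>x\<in>(\<lambda>P. mutual_info P Q) ` input_distrs. x \<le> R)"
    unfolding bdd_above_def by blast
  then show ?thesis by force
qed

lemma real_nat_ceiling_exp:
  shows "1 \<le> nat \<lceil>exp x\<rceil>" and "exp x \<le> real (nat \<lceil>exp x\<rceil>)" and "real (nat \<lceil>exp x\<rceil>) \<le> exp x + 1"
  using exp_gt_zero[of x] by linarith+

lemma ennreal_mult_le_ennreal:
  assumes "D \<le> ennreal d" "0 \<le> d" "r * d \<le> x"
  shows "ennreal r * D \<le> ennreal x"
proof (cases "r \<le> 0")
  case False
  then have "ennreal r * D \<le> ennreal (r * d)"
    using assms(1,2) by (simp add: ennreal_mult mult_left_mono)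
  also have "\<dots> \<le> ennreal x" using assms(3) by (rule ennreal_leI)
  finally show ?thesis .
qed (simp add: ennreal_neg)

lemma window_count_times_bound_le:
  fixes g \<alpha> R' T :: real
  assumes g: "0 \<le> g" and \<alpha>: "0 < \<alpha>" and "0 < R'"
    and A: "real A \<le> exp (\<alpha> * real N) + 1" and M: "real M \<le> exp (R' * real N) + 1"
  defines "c \<equiv> 2 + 1 / \<alpha>" and "q \<equiv> exp (2 * \<alpha> + R' - T)"
  shows "real (A + N - 1) * (g ^ N + real (A + N - 1) * real M / exp (real N * T))
      \<le> c * (exp \<alpha> * g) ^ N + 2 * c\<^sup>2 * q ^ N"
proof -
  have "\<alpha> * real N \<le> exp (\<alpha> * real N)" using exp_ge_add_one_self[of "\<alpha> * real N"] by linarith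
  then have "real N \<le> exp (\<alpha> * real N) / \<alpha>" using \<alpha> by (simp add: le_divide_eq mult.commute)
  moreover have "c * exp (\<alpha> * real N) = 2 * exp (\<alpha> * real N) + exp (\<alpha> * real N) / \<alpha>"
    unfolding c_def using \<alpha> by (simp add: field_simps)
  moreover have "1 \<le> exp (\<alpha> * real N)" "1 \<le> exp (R' * real N)"
    using \<alpha> \<open>0 < R'\<close> by simp_all
  moreover have "real (A + N - 1) \<le> real A + real N" by linarith
  ultimately have K: "real (A + N - 1) \<le> c * exp (\<alpha> * real N)" and M': "real M \<le> 2 * exp (R' * real N)"
    using A M by linarith+
  have miss_term: "real (A + N - 1) * g ^ N \<le> c * (exp \<alpha> * g) ^ N"
    using mult_right_mono[OF K, of "g ^ N"] g by (simp add: exp_of_nat_mult[symmetric] power_mult_distrib mult_ac)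
  have "real (A + N - 1) * (real (A + N - 1) * real M) \<le> c * exp (\<alpha> * real N) * (c * exp (\<alpha> * real N) * (2 * exp (R' * real N)))"
    using K M' by (intro mult_mono) auto
  then have "real (A + N - 1) * (real (A + N - 1) * real M / exp (real N * T))
      \<le> c * exp (\<alpha> * real N) * (c * exp (\<alpha> * real N) * (2 * exp (R' * real N))) / exp (real N * T)"
    by (simp add: divide_right_mono)
  also have "\<dots> = 2 * c\<^sup>2 * q ^ N"
  proof -
    have "q ^ N = exp (\<alpha> * real N) * exp (\<alpha> * real N) * exp (R' * real N) / exp (real N * T)"
      unfolding q_def exp_of_nat_mult[symmetric]
      by (simp add: exp_add[symmetric] exp_diff[symmetric] algebra_simps)
    then show ?thesis by (simp add: power2_eq_square)
  qed
  finally show ?thesis using miss_term by (simp add: distrib_left)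
qed

text \<open>With \<open>A \<approx> e\<^sup>\<alpha>\<^sup>N\<close> start times and \<open>M \<approx> e\<^sup>R\<^sup>'\<^sup>N\<close> messages, the window count \<open>K = A + N - 1\<close>
  times the union bound \<open>g\<^sup>N + K M e\<^sup>-\<^sup>N\<^sup>T\<close> decays geometrically.\<close>

lemma eventually_window_count_times_bound_less:
  fixes g \<alpha> R' T \<eta> :: real
  assumes g: "0 \<le> g" "exp \<alpha> * g < 1" and \<alpha>: "0 < \<alpha>" and "0 < R'" "2 * \<alpha> + R' < T" "0 < \<eta>"
  shows "\<forall>\<^sub>F N in sequentially. \<forall>A M :: nat.
           real A \<le> exp (\<alpha> * real N) + 1 \<longrightarrow> real M \<le> exp (R' * real N) + 1 \<longrightarrow>
           real (A + N - 1) * (g ^ N + real (A + N - 1) * real M / exp (real N * T)) < \<eta>"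
proof -
  define c where "c = 2 + 1 / \<alpha>"
  define q where "q = exp (2 * \<alpha> + R' - T)"
  have q: "0 < q" "q < 1" unfolding q_def using assms by auto
  have "(\<lambda>N. c * (exp \<alpha> * g) ^ N + 2 * c\<^sup>2 * q ^ N) \<longlonglongrightarrow> c * 0 + 2 * c\<^sup>2 * 0"
    using g q by (intro tendsto_intros LIMSEQ_power_zero) auto
  then have "\<forall>\<^sub>F N in sequentially. c * (exp \<alpha> * g) ^ N + 2 * c\<^sup>2 * q ^ N < \<eta>"
    using assms by (intro order_tendstoD(2)) auto
  then show ?thesis
    using window_count_times_bound_le[OF g(1) \<alpha> \<open>0 < R'\<close>, where T=T, folded c_def q_def]
    by (elim eventually_mono) (blast intro: order.strict_trans1)
qed

lemma mult_le_mult_of_le: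
  fixes r R' d n :: real
  assumes "r \<le> R'" "0 \<le> R'" "0 \<le> d" "d \<le> n"
  shows "r * d \<le> R' * n"
proof (cases "r \<le> 0")
  case True
  then have "r * d \<le> 0" using assms(3) by (simp add: mult_nonpos_nonneg)
  moreover have "0 \<le> R' * n" using assms by simp
  ultimately show ?thesis by linarith
next
  case False
  then have "r * d \<le> r * n" using assms(4) by (intro mult_left_mono) auto
  also have "\<dots> \<le> R' * n" using assms by (intro mult_right_mono) auto
  finally show ?thesis .
qed

lemma exists_exp_mult_less_1:
  fixes g b :: real
  assumes "0 \<le> g" "g < 1" "0 < b"
  shows "\<exists>\<alpha>>0. \<alpha> \<le> b \<and> exp \<alpha> * g < 1"
proof (cases "g = 0")
  case False
  define \<alpha> where "\<alpha> = min b (- ln g / 2)"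
  have "0 < g" using assms(1) False by simp
  then have "0 < \<alpha>" using assms unfolding \<alpha>_def by simp
  have "exp \<alpha> * g \<le> exp (- ln g / 2) * g"
    using assms(1) unfolding \<alpha>_def by (intro mult_right_mono) auto
  also have "\<dots> = exp (ln g / 2)"
    using \<open>0 < g\<close> by (simp add: exp_minus field_simps flip: exp_add)
  also have "\<dots> < 1" using \<open>0 < g\<close> assms(2) by simp
  finally have "exp \<alpha> * g < 1" .
  moreover have "\<alpha> \<le> b" unfolding \<alpha>_def by simp
  ultimately show ?thesis using \<open>0 < \<alpha>\<close> by blast
qed (use assms in auto)

lemma code_meets_rate_and_error:
  fixes \<delta> \<epsilon> R R' :: real
  assumes err: "avg_err Q star A M N c stop dec \<le> ennreal \<delta>"
    and delay: "avg_delay Q star A M N c stop \<le> ennreal (real (N - 1) + real K * \<delta>)"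
    and small: "real K * \<delta> < min 1 \<epsilon>" and "0 \<le> \<delta>" "1 \<le> K" "1 \<le> N"
    and rate: "R \<le> R'" "0 \<le> R'" "R' * real N \<le> ln (real M)" and "0 < \<epsilon>"
  shows "avg_err Q star A M N c stop dec \<le> ennreal \<epsilon>"
    and "ennreal (R - \<epsilon>) * avg_delay Q star A M N c stop \<le> ennreal (ln (real M))"
proof -
  have "\<delta> \<le> real K * \<delta>" using \<open>0 \<le> \<delta>\<close> \<open>1 \<le> K\<close> by (simp add: mult_le_cancel_right1)
  then show "avg_err Q star A M N c stop dec \<le> ennreal \<epsilon>"
    using err small by (meson ennreal_leI min.strict_boundedE order_trans less_imp_le order.trans)
  have "(R - \<epsilon>) * (real (N - 1) + real K * \<delta>) \<le> R' * real N"
    using assms by (intro mult_le_mult_of_le) (auto simp: of_nat_diff)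
  then show "ennreal (R - \<epsilon>) * avg_delay Q star A M N c stop \<le> ennreal (ln (real M))"
    using rate(3) \<open>0 \<le> \<delta>\<close> by (intro ennreal_mult_le_ennreal[OF delay]) auto
qed

context input_channel
begin

lemma achievable_async_exponent_of_parameters:
  assumes R': "0 < R'" "R \<le> R'" and \<alpha>: "0 < \<alpha>" and s: "0 \<le> s"
    and mgf: "exp \<alpha> * chernoff_mgf P Q T s < 1" and T: "2 * \<alpha> + R' < T"
  shows "achievable_async_exponent Q star \<alpha> R"
  unfolding achievable_async_exponent_def
proof (intro allI impI)
  fix \<epsilon> :: real assume "0 < \<epsilon>"
  from eventually_window_count_times_bound_less[OF chernoff_mgf_nonneg mgf \<alpha> R'(1) T, of "min 1 \<epsilon>"]
  obtain N0 where N0: "\<And>N A M. N0 \<le> N \<Longrightarrow> real A \<le> exp (\<alpha> * real N) + 1 \<Longrightarrow> real M \<le> exp (R' * real N) + 1 \<Longrightarrow>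
      real (A + N - 1) * (chernoff_mgf P Q T s ^ N + real (A + N - 1) * real M / exp (real N * T)) < min 1 \<epsilon>"
    using \<open>0 < \<epsilon>\<close> unfolding eventually_sequentially by auto
  have "\<exists>(M::nat) c stop dec. M \<ge> 2 \<and> avg_err Q star A M N c stop dec \<le> ennreal \<epsilon>
          \<and> ennreal (R - \<epsilon>) * avg_delay Q star A M N c stop \<le> ennreal (ln (real M))"
    if N: "max N0 1 \<le> N" and A_def: "A = nat \<lceil>exp ((\<alpha> - \<epsilon>) * real N)\<rceil>" for N A
  proof -
    define M where "M = nat \<lceil>exp (R' * real N)\<rceil>"
    define K where "K = A + N - 1"
    define \<delta> where "\<delta> = chernoff_mgf P Q T s ^ N + real K * real M / exp (real N * T)"
    have "exp ((\<alpha> - \<epsilon>) * real N) \<le> exp (\<alpha> * real N)" using \<open>0 < \<epsilon>\<close> by (simp add: algebra_simps)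
    then have A: "1 \<le> A" "real A \<le> exp (\<alpha> * real N) + 1"
      using real_nat_ceiling_exp[of "(\<alpha> - \<epsilon>) * real N"] unfolding A_def by linarith+
    have "1 < exp (R' * real N)" using R'(1) N by simp
    then have M: "2 \<le> M" "R' * real N \<le> ln (real M)" "real M \<le> exp (R' * real N) + 1"
      using real_nat_ceiling_exp[of "R' * real N"] ln_ge_iff[of "real M" "R' * real N"]
      unfolding M_def[symmetric] by linarith+
    obtain c stop dec where code: "avg_err Q star A M N c stop dec \<le> ennreal \<delta>"
      "avg_delay Q star A M N c stop \<le> ennreal (real (N - 1) + real K * \<delta>)"
      using exists_code_le[where N=N and A=A and M=M and s=s and T=T and star=star] N A(1) M(1) s
      unfolding K_def \<delta>_def by auto
    have small: "real K * \<delta> < min 1 \<epsilon>" "0 \<le> \<delta>" "1 \<le> K"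
      using N0[of N A M] N A M chernoff_mgf_nonneg[of T s] unfolding K_def \<delta>_def by auto
    have "1 \<le> N" "0 \<le> R'" using N R'(1) by auto
    from code_meets_rate_and_error[OF code small this(1) R'(2) this(2) M(2) \<open>0 < \<epsilon>\<close>]
    show ?thesis using M(1) by blast
  qed
  then show "\<exists>N0. \<forall>N\<ge>N0. \<exists>(M::nat) c stop dec. let A = nat \<lceil>exp ((\<alpha> - \<epsilon>) * real N)\<rceil> in
      M \<ge> 2 \<and> avg_err Q star A M N c stop dec \<le> ennreal \<epsilon> \<and>
      ennreal (R - \<epsilon>) * avg_delay Q star A M N c stop \<le> ennreal (ln (real M))"
    unfolding Let_def by blast
qed

lemma exists_achievable_async_exponent:
  assumes "0 < R" "R < mutual_info P Q"
  shows "\<exists>\<alpha>>0. achievable_async_exponent Q star \<alpha> R"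
proof -
  define d where "d = mutual_info P Q - R"
  define T where "T = R + d / 2"
  have "0 < d" "T < mutual_info P Q" using assms(2) unfolding d_def T_def by (simp_all add: field_simps)
  then obtain s where s: "0 < s" "chernoff_mgf P Q T s < 1"
    using exists_chernoff_mgf_less_1 by blast
  obtain \<alpha> where \<alpha>: "0 < \<alpha>" "\<alpha> \<le> d / 16" "exp \<alpha> * chernoff_mgf P Q T s < 1"
    using exists_exp_mult_less_1[OF chernoff_mgf_nonneg s(2), of "d / 16"] \<open>0 < d\<close> by auto
  have "achievable_async_exponent Q star \<alpha> R"
    using \<alpha> s assms(1) \<open>0 < d\<close> unfolding T_def
    by (intro achievable_async_exponent_of_parameters[where R'="R + d / 8" and s=s]) auto
  then show ?thesis using \<alpha>(1) by blast
qed

end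

theorem corollary1:
  fixes Q :: "'x::finite \<Rightarrow> 'y::finite \<Rightarrow> real" and star :: 'x and R :: real
  assumes "dmc Q"
    and "\<forall>y. \<exists>x. Q x y > 0"
    and "capacity Q > 0"
    and "0 < R" and "R < capacity Q"
  shows "\<exists>\<alpha>>0. achievable_async_exponent Q star \<alpha> R"
proof -
  obtain P where "P \<in> input_distrs" "R < mutual_info P Q"
    using exists_input_distr_mutual_info_gt[OF assms(5)] by blast
  then interpret input_channel P Q
    using assms(1) unfolding input_distrs_def input_channel_def by auto
  show ?thesis
    using exists_achievable_async_exponent[OF assms(4) \<open>R < mutual_info P Q\<close>] .
qed

end
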